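(* Let $M>0$ and $E\in(\sqrt{25/27},1)$. Let $W(r;H,L)=\frac12\bigl(\frac{L^2}{r^2}-2H\bigr)\bigl(1-\frac{2M}{r}\bigr)$ for $r>2M$, $Z(r;H,L)=W(r;H,L)-\frac12E^2$, $\widetilde\Lambda=\{(H,L): H<0,\ L>4\sqrt2\sqrt{-H}M\}$, $r_0(H,L)=\dfrac{L^2+L\sqrt{L^2+24HM^2}}{-4HM}$, $\omega_0(H,L)=-W(r_0(H,L);H,L)$, and $$\Lambda_E=\Bigl\{(H,L)\in\widetilde\Lambda:\ -\omega_0(H,L)<\tfrac12E^2<-H\Bigr\}.$$ Then $$\Lambda_E=\Bigl\{(H,L)\in\mathbb{R}^2:\ -\tfrac{27}{50}E^2<H<-\tfrac12E^2,\ \ 4\sqrt2\sqrt{-H}\,M<L<\sqrt{-H}\,M\,\zeta^{-1}\Bigl(\frac{E^2}{-2H}\Bigr)\Bigr\}.$$ Moreover: (i) for every $(H,L)\in\Lambda_E$, $Z(r_0(H,L);H,L)<0$, $Z'(r_0(H,L);H,L)=0$, $Z''(r_0(H,L);H,L)>0$; (ii) there exist continuous functions $r_-,r_+\colon\Lambda_E\to(0,+\infty)$ with $r_-<r_0<r_+$ such that, for every $(H,L)\in\Lambda_E$, $Z(r_\pm(H,L);H,L)=0$ and $Z'(r;H,L)(r-r_0(H,L))>0$ for every $r\in[r_-(H,L),r_+(H,L)]\setminus\{r_0(H,L)\}$.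
   Context: Derivatives ${}'$ are with respect to $r$. The function $\zeta\colon(4\sqrt2,+\infty)\to\mathbb{R}$ is $\zeta(u)=\dfrac{u^4-20u^2+32+u(u^2-8)\sqrt{u^2-24}}{u^4-18u^2+u(u^2-6)\sqrt{u^2-24}}$; it is strictly increasing with image $(25/27,1)$, and $\zeta^{-1}$ denotes its inverse. *)

theory Defs
  imports "HOL-Analysis.Analysis"
begin

definition zeta :: "real \<Rightarrow> real" where
  "zeta u = (u^4 - 20*u^2 + 32 + u*(u^2 - 8) * sqrt (u^2 - 24)) /
            (u^4 - 18*u^2 + u*(u^2 - 6) * sqrt (u^2 - 24))"

definition zeta_inv :: "real \<Rightarrow> real" where
  "zeta_inv = the_inv_into {4 * sqrt 2<..} zeta"

definition W :: "real \<Rightarrow> real \<Rightarrow> real \<Rightarrow> real \<Rightarrow> real" where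
  "W M H L r = 1/2 * (L^2 / r^2 - 2*H) * (1 - 2*M / r)"

definition Z :: "real \<Rightarrow> real \<Rightarrow> real \<Rightarrow> real \<Rightarrow> real \<Rightarrow> real" where
  "Z M E H L r = W M H L r - 1/2 * E^2"

definition Lambda_tilde :: "real \<Rightarrow> (real \<times> real) set" where
  "Lambda_tilde M = {(H, L). H < 0 \<and> L > 4 * sqrt 2 * sqrt (-H) * M}"

definition r0 :: "real \<Rightarrow> real \<Rightarrow> real \<Rightarrow> real" where
  "r0 M H L = (L^2 + L * sqrt (L^2 + 24*H*M^2)) / (-4*H*M)"

definition omega0 :: "real \<Rightarrow> real \<Rightarrow> real \<Rightarrow> real" where
  "omega0 M H L = - W M H L (r0 M H L)"

definition Lambda_E :: "real \<Rightarrow> real \<Rightarrow> (real \<times> real) set" where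
  "Lambda_E M E = {(H, L). (H, L) \<in> Lambda_tilde M \<and>
      - omega0 M H L < 1/2 * E^2 \<and> 1/2 * E^2 < -H}"

end

theory Submission
  imports Defs
begin

(* Put u = L / (sqrt (-H) M). The critical radii of W are the roots r1 < r0 of
   -2 H M r^2 - L^2 r + 3 L^2 M, and at a critical radius r = M s one has
   W = -H (s - 2)^2 / (s (s - 3)); since r0 = M (u^2 + u sqrt (u^2 - 24)) / 4, this gives
   W r0 = -H zeta u. So -omega0 < E^2/2 reads zeta u < E^2 / (-2H), which by monotonicity of
   zeta means u < zeta_inv (E^2 / (-2H)) and forces E^2 / (-2H) > 25/27.
   Z decreases on [r1, r0] from Z r1 > 0 (as r1 < 4M) to Z r0 < 0 and increases on [r0, oo)
   to a positive value, so it has one zero on each side of r0, where it changes sign; such a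
   sign-changing zero of a continuous family, trapped between continuous bounds, depends
   continuously on the parameter. *)

definition sign_change_root :: "(real \<Rightarrow> real) \<Rightarrow> real \<Rightarrow> real \<Rightarrow> real \<Rightarrow> bool" where
  "sign_change_root f a b r \<longleftrightarrow>
     a < r \<and> r < b \<and> f r = 0 \<and> (\<forall>x\<in>{a<..<r}. f x < 0) \<and> (\<forall>x\<in>{r<..<b}. 0 < f x)"

lemma sign_change_root_exists:
  fixes f :: "real \<Rightarrow> real"
  assumes "a < b" "continuous_on {a..b} f" "strict_mono_on {a..b} f" "f a < 0" "0 < f b"
  shows "\<exists>r. sign_change_root f a b r"
proof -
  obtain r where r: "a \<le> r" "r \<le> b" "f r = 0"
    using IVT'[of f a 0 b] assms by auto
  then have "a < r" "r < b" using assms by (auto simp: order.order_iff_strict)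
  moreover have "f x < 0" if "x \<in> {a<..<r}" for x
    using monotone_onD[OF assms(3), of x r] that r by auto
  moreover have "0 < f x" if "x \<in> {r<..<b}" for x
    using monotone_onD[OF assms(3), of r x] that r by auto
  ultimately show ?thesis unfolding sign_change_root_def using r by blast
qed

lemma sign_change_root_reflect:
  "sign_change_root (\<lambda>x. - f (- x)) (- b) (- a) (- r) \<longleftrightarrow> sign_change_root f a b r"
proof -
  have reflect: "(\<forall>x\<in>{-d<..<-c}. P (- x)) \<longleftrightarrow> (\<forall>x\<in>{c<..<d}. P x)" for P and c d :: real
  proof
    assume "\<forall>x\<in>{-d<..<-c}. P (- x)"
    then show "\<forall>x\<in>{c<..<d}. P x" by (metis greaterThanLessThan_iff minus_minus neg_less_iff_less)
  qed auto
  show ?thesis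
    unfolding sign_change_root_def
    using reflect[where P = "\<lambda>x. 0 < f x" and c = r and d = b]
      reflect[where P = "\<lambda>x. f x < 0" and c = a and d = r] by auto
qed

lemma eventually_less_sign_change_root:
  fixes f :: "'a::topological_space \<Rightarrow> real \<Rightarrow> real"
  assumes roots: "\<And>p. p \<in> S \<Longrightarrow> sign_change_root (f p) (a p) (b p) (\<rho> p)"
    and cont: "continuous_on S a" "continuous_on S b" "\<And>x. continuous_on S (\<lambda>p. f p x)"
    and p0: "p0 \<in> S" and c: "c < \<rho> p0"
  shows "\<forall>\<^sub>F p in at p0 within S. c < \<rho> p"
proof -
  have root0: "a p0 < \<rho> p0" "\<rho> p0 < b p0" "\<forall>x\<in>{a p0<..<\<rho> p0}. f p0 x < 0"
    using roots[OF p0] unfolding sign_change_root_def by auto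
  obtain d where d: "max c (a p0) < d" "d < \<rho> p0" using c root0 dense by (metis max_less_iff_conj)
  have tendsto: "((\<lambda>p. g p) \<longlongrightarrow> g p0) (at p0 within S)" if "continuous_on S g" for g :: "'a \<Rightarrow> real"
    using that p0 unfolding continuous_on_def by blast
  have "\<forall>\<^sub>F p in at p0 within S. p \<in> S" by (simp add: eventually_at_filter)
  moreover have "\<forall>\<^sub>F p in at p0 within S. a p < d"
    using d by (intro order_tendstoD(2)[OF tendsto[OF cont(1)]]) auto
  moreover have "\<forall>\<^sub>F p in at p0 within S. d < b p"
    using d root0 by (intro order_tendstoD(1)[OF tendsto[OF cont(2)]]) auto
  moreover have "\<forall>\<^sub>F p in at p0 within S. f p d < 0"
    using d root0 by (intro order_tendstoD(2)[OF tendsto[OF cont(3)]]) auto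
  ultimately show ?thesis
  proof eventually_elim
    case (elim p)
    have pos: "\<forall>x\<in>{\<rho> p<..<b p}. 0 < f p x" using roots[OF elim(1)] unfolding sign_change_root_def by blast
    show "c < \<rho> p"
    proof (rule ccontr)
      assume "\<not> c < \<rho> p"
      then have "d \<in> {\<rho> p<..<b p}" using d elim(3) by simp
      then show False using pos elim(4) by fastforce
    qed
  qed
qed

lemma continuous_on_sign_change_root:
  fixes f :: "'a::topological_space \<Rightarrow> real \<Rightarrow> real"
  assumes roots: "\<And>p. p \<in> S \<Longrightarrow> sign_change_root (f p) (a p) (b p) (\<rho> p)"
    and cont: "continuous_on S a" "continuous_on S b" "\<And>x. continuous_on S (\<lambda>p. f p x)"
  shows "continuous_on S \<rho>"
  unfolding continuous_on_def
proof (intro ballI order_tendstoI)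
  fix p0 c assume "p0 \<in> S"
  show "c < \<rho> p0 \<Longrightarrow> \<forall>\<^sub>F p in at p0 within S. c < \<rho> p"
    by (rule eventually_less_sign_change_root[OF roots cont \<open>p0 \<in> S\<close>])
  assume "\<rho> p0 < c"
  \<comment> \<open>the lower estimate for the reflected family \<open>x \<mapsto> - f p (- x)\<close>\<close>
  then have "\<forall>\<^sub>F p in at p0 within S. - c < - \<rho> p"
    using roots cont \<open>p0 \<in> S\<close>
    by (intro eventually_less_sign_change_root[where f = "\<lambda>p x. - f p (- x)" and a = "\<lambda>p. - b p"
        and b = "\<lambda>p. - a p"]) (auto simp: sign_change_root_reflect intro: continuous_intros)
  then show "\<forall>\<^sub>F p in at p0 within S. \<rho> p < c" by simp
qed

lemma four_sqrt2_less_iff: "4 * sqrt 2 < u \<longleftrightarrow> 0 < u \<and> 32 < u^2" for u :: real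
proof -
  have sq: "4 * sqrt 2 = sqrt (32::real)"
    using real_sqrt_mult[of 16 2] by simp
  show ?thesis
  proof
    assume "4 * sqrt 2 < u"
    then show "0 < u \<and> 32 < u^2"
      unfolding sq by (smt (verit) real_sqrt_ge_zero real_sqrt_less_iff real_sqrt_abs)
  next
    assume "0 < u \<and> 32 < u^2"
    then show "4 * sqrt 2 < u" unfolding sq by (simp add: real_less_lsqrt)
  qed
qed

(* For u = L / (sqrt (-H) * M), zeta_radius u is r0 / M, and zeta_ratio s is W / (-H) at a
   critical radius r = M s of W. *)
definition zeta_radius :: "real \<Rightarrow> real" where
  "zeta_radius u = (u^2 + u * sqrt (u^2 - 24)) / 4"

definition zeta_ratio :: "real \<Rightarrow> real" where
  "zeta_ratio s = (s - 2)^2 / (s * (s - 3))"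

lemma zeta_radius_gt_12:
  assumes "4 * sqrt 2 < u"
  shows "12 < zeta_radius u"
proof -
  define q where "q = sqrt (u^2 - 24)"
  have u: "0 < u" "32 < u^2" using assms four_sqrt2_less_iff by auto
  have q: "q^2 = u^2 - 24" "0 \<le> q" using u unfolding q_def by simp_all
  have "32 * 8 < u^2 * q^2" using u q by (intro mult_strict_mono) auto
  then have "16^2 < (u * q)^2" by (simp add: power_mult_distrib)
  then have "16 < u * q"
    by (rule power2_less_imp_less) (use u q in simp)
  then show ?thesis
    unfolding zeta_radius_def q_def[symmetric] using u by simp
qed

lemma strict_mono_on_zeta_radius: "strict_mono_on {4 * sqrt 2<..} zeta_radius"
proof (rule strict_mono_onI)
  fix u v assume "u \<in> {4 * sqrt 2<..}" "u < v"
  then have u: "0 < u" "32 < u^2" and uv: "u^2 < v^2"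
    using four_sqrt2_less_iff by (auto simp: power_strict_mono)
  have "u * sqrt (u^2 - 24) \<le> v * sqrt (v^2 - 24)"
    using u uv \<open>u < v\<close> by (intro mult_mono) auto
  then show "zeta_radius u < zeta_radius v"
    unfolding zeta_radius_def using uv by simp
qed

lemma zeta_eq_zeta_ratio:
  assumes "4 * sqrt 2 < u"
  shows "zeta u = zeta_ratio (zeta_radius u)"
proof -
  define q where "q = sqrt (u^2 - 24)"
  define s where "s = zeta_radius u"
  have q2: "q^2 = u^2 - 24" using assms four_sqrt2_less_iff unfolding q_def by simp
  have s: "s = (u^2 + u * q) / 4" unfolding s_def zeta_radius_def q_def ..
  have num: "u^4 - 20*u^2 + 32 + u*(u^2 - 8) * q = 8 * (s - 2)^2"
  proof -
    have "8 * (s - 2)^2 - (u^4 - 20*u^2 + 32 + u*(u^2 - 8) * q) = u^2 * (q^2 - (u^2 - 24)) / 2"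
      unfolding s(1) power4_eq_xxxx power2_eq_square by (simp add: field_simps)
    then show ?thesis using q2 by simp
  qed
  have den: "u^4 - 18*u^2 + u*(u^2 - 6) * q = 8 * (s * (s - 3))"
  proof -
    have "8 * (s * (s - 3)) - (u^4 - 18*u^2 + u*(u^2 - 6) * q) = u^2 * (q^2 - (u^2 - 24)) / 2"
      unfolding s(1) power4_eq_xxxx power2_eq_square by (simp add: field_simps)
    then show ?thesis using q2 by simp
  qed
  show ?thesis
    unfolding zeta_def zeta_ratio_def q_def[symmetric] s_def[symmetric] num den by simp
qed

lemma zeta_ratio_eq: "3 < s \<Longrightarrow> zeta_ratio s = 1 - (s - 4) / (s * (s - 3))"
  unfolding zeta_ratio_def by (simp add: field_simps power2_eq_square)

lemma strict_mono_on_zeta_ratio: "strict_mono_on {6..} zeta_ratio"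
proof (rule strict_mono_onI)
  fix a b :: real assume "a \<in> {6..}" "a < b"
  then have ab: "6 \<le> a" "a < b" by auto
  have "2 * 2 < (a - 4) * (b - 4)" using ab by (intro mult_le_less_imp_less) auto
  then have "0 < (b - a) * ((a - 4) * (b - 4) - 4)" using ab by simp
  then have "(b - 4) * (a * (a - 3)) < (a - 4) * (b * (b - 3))" by (simp add: algebra_simps)
  then have "(b - 4) / (b * (b - 3)) < (a - 4) / (a * (a - 3))"
    using ab by (simp add: divide_simps mult.commute mult.left_commute)
  then show "zeta_ratio a < zeta_ratio b" using ab zeta_ratio_eq by simp
qed

lemma zeta_ratio_less_1: "4 < s \<Longrightarrow> zeta_ratio s < 1"
  using zeta_ratio_eq[of s] by simp

lemma zeta_ratio_gt:
  assumes "4 < s"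
  shows "1 - 1 / s < zeta_ratio s"
proof -
  have "(s - 4) / (s * (s - 3)) < 1 / s" using assms by (simp add: divide_simps)
  then show ?thesis using assms zeta_ratio_eq by simp
qed

lemma zeta_ratio_12: "zeta_ratio 12 = 25 / 27"
  unfolding zeta_ratio_def by simp

lemma strict_mono_on_zeta: "strict_mono_on {4 * sqrt 2<..} zeta"
proof (rule strict_mono_onI)
  fix u v assume "u \<in> {4 * sqrt 2<..}" "u < v"
  then have "12 < zeta_radius u" "zeta_radius u < zeta_radius v"
    using zeta_radius_gt_12 monotone_onD[OF strict_mono_on_zeta_radius] by auto
  then have "zeta_ratio (zeta_radius u) < zeta_ratio (zeta_radius v)"
    by (intro monotone_onD[OF strict_mono_on_zeta_ratio]) auto
  then show "zeta u < zeta v"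
    using \<open>u \<in> _\<close> \<open>u < v\<close> by (simp add: zeta_eq_zeta_ratio)
qed

lemma zeta_bounds:
  assumes "4 * sqrt 2 < u"
  shows "25 / 27 < zeta u" "zeta u < 1"
proof -
  have "12 < zeta_radius u" using zeta_radius_gt_12[OF assms] .
  then show "25 / 27 < zeta u" "zeta u < 1"
    using monotone_onD[OF strict_mono_on_zeta_ratio, of 12 "zeta_radius u"]
    by (simp_all add: zeta_eq_zeta_ratio[OF assms] zeta_ratio_12 zeta_ratio_less_1)
qed

lemma zeta_4sqrt2: "zeta (4 * sqrt 2) = 25 / 27"
proof -
  have sq: "(4 * sqrt (2::real))^2 = 32" by (simp add: power_mult_distrib)
  have "(4 * sqrt (2::real))^4 = 32^2" by (metis sq power_mult[of _ 2 2] num_double numeral_times_numeral)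
  moreover have "sqrt (8::real) = 2 * sqrt 2" using real_sqrt_mult[of 4 2] by simp
  ultimately show ?thesis unfolding zeta_def sq by (simp add: mult.assoc mult.left_commute)
qed

lemma isCont_zeta:
  assumes "4 * sqrt 2 \<le> u"
  shows "isCont zeta u"
proof -
  have "(4 * sqrt (2::real))^2 = 32" by (simp add: power_mult_distrib)
  then have u: "0 < u" "32 \<le> u^2"
    using less_le_trans[OF _ assms, of 0] power_mono[OF assms, of 2] by auto
  have "0 < u^2 * (u^2 - 18)" using u by simp
  moreover have "0 \<le> u * (u^2 - 6) * sqrt (u^2 - 24)" using u by simp
  ultimately have "u^4 - 18*u^2 + u*(u^2 - 6) * sqrt (u^2 - 24) \<noteq> 0"
    by (simp add: algebra_simps power4_eq_xxxx power2_eq_square)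
  then show ?thesis unfolding zeta_def[abs_def] by (intro continuous_intros) auto
qed

lemma zeta_image: "zeta ` {4 * sqrt 2<..} = {25 / 27<..<1}"
proof
  show "zeta ` {4 * sqrt 2<..} \<subseteq> {25 / 27<..<1}" using zeta_bounds by auto
next
  show "{25 / 27<..<1} \<subseteq> zeta ` {4 * sqrt 2<..}"
  proof
    fix y :: real assume "y \<in> {25 / 27<..<1}"
    then have y: "25 / 27 < y" "y < 1" by auto
    define s where "s = max 13 (1 / (1 - y) + 1)"
    define U where "U = 2 * sqrt s"
    have s: "13 \<le> s" "1 / (1 - y) < s" unfolding s_def by auto
    then have "1 / s < 1 - y" using y by (simp add: field_simps)
    then have ratio_s: "y < zeta_ratio s" using zeta_ratio_gt[of s] s by simp
    have U2: "U^2 = 4 * s" unfolding U_def using s by (simp add: power_mult_distrib)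
    have U: "4 * sqrt 2 < U" unfolding four_sqrt2_less_iff U2 unfolding U_def using s by simp
    have "s \<le> zeta_radius U" unfolding zeta_radius_def U2 using U s by (simp add: U_def)
    then have "zeta_ratio s \<le> zeta_ratio (zeta_radius U)"
      using strict_mono_on_less_eq[OF strict_mono_on_zeta_ratio, of s "zeta_radius U"] s by simp
    then have "y \<le> zeta U" using ratio_s zeta_eq_zeta_ratio[OF U] by simp
    moreover have "zeta (4 * sqrt 2) \<le> y" using zeta_4sqrt2 y by simp
    ultimately obtain x where x: "4 * sqrt 2 \<le> x" "x \<le> U" "zeta x = y"
      using IVT[of zeta "4 * sqrt 2" y U] U isCont_zeta by auto
    moreover have "x \<noteq> 4 * sqrt 2" using x zeta_4sqrt2 y by auto
    ultimately show "y \<in> zeta ` {4 * sqrt 2<..}" by force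
  qed
qed

lemma zeta_inv:
  assumes "25 / 27 < y" "y < 1"
  shows "4 * sqrt 2 < zeta_inv y" "zeta (zeta_inv y) = y"
proof -
  have y: "y \<in> zeta ` {4 * sqrt 2<..}" using assms zeta_image by simp
  have inj: "inj_on zeta {4 * sqrt 2<..}" by (rule strict_mono_on_imp_inj_on[OF strict_mono_on_zeta])
  show "4 * sqrt 2 < zeta_inv y" "zeta (zeta_inv y) = y"
    unfolding zeta_inv_def using the_inv_into_into[OF inj y order_refl] f_the_inv_into_f[OF inj y]
    by simp_all
qed

lemma zeta_less_iff_less_zeta_inv:
  assumes "25 / 27 < y" "y < 1" "4 * sqrt 2 < u"
  shows "zeta u < y \<longleftrightarrow> u < zeta_inv y"
  using strict_mono_on_less[OF strict_mono_on_zeta, of u "zeta_inv y"] zeta_inv[OF assms(1,2)] assms(3)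
  by simp

lemma mem_Lambda_tilde_iff: "(H, L) \<in> Lambda_tilde M \<longleftrightarrow> H < 0 \<and> 4 * sqrt 2 * sqrt (-H) * M < L"
  unfolding Lambda_tilde_def by simp

lemma mem_Lambda_E_iff:
  "(H, L) \<in> Lambda_E M E \<longleftrightarrow>
     (H, L) \<in> Lambda_tilde M \<and> W M H L (r0 M H L) < E^2 / 2 \<and> E^2 / 2 < -H"
  unfolding Lambda_E_def omega0_def by auto

lemma has_real_derivative_Z:
  assumes "r \<noteq> 0"
  shows "(Z M E H L has_real_derivative (-2*H*M*r^2 - L^2*r + 3*L^2*M) / r^4) (at r)"
proof -
  have "((\<lambda>r. 1/2 * (L^2 / r^2 - 2*H) * (1 - 2*M / r) - 1/2 * E^2) has_real_derivative
     1/2 * ((L^2 * -(2*r) / (r^2)^2) * (1 - 2*M/r) + (L^2 / r^2 - 2*H) * (2*M / r^2))) (at r)"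
    using assms by (auto intro!: derivative_eq_intros simp: power2_eq_square)
  moreover have "1/2 * ((L^2 * -(2*r) / (r^2)^2) * (1 - 2*M/r) + (L^2 / r^2 - 2*H) * (2*M / r^2))
      = (-2*H*M*r^2 - L^2*r + 3*L^2*M) / r^4"
    using assms by (simp add: field_simps power2_eq_square power4_eq_xxxx)
  ultimately show ?thesis unfolding Z_def[abs_def] W_def by (rule DERIV_cong)
qed

lemma continuous_on_Z: "continuous_on {0<..} (Z M E H L)"
  unfolding Z_def[abs_def] W_def by (intro continuous_intros) auto

lemma W_at_critical_point:
  assumes "0 < M" "3 * M < r" "-2*H*M*r^2 - L^2*r + 3*L^2*M = 0"
  shows "W M H L r = -H * (r - 2*M)^2 / (r * (r - 3*M))"
proof -
  have r: "0 < r" "0 < r - 3*M" using assms by auto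
  have L2: "L^2 = -2*H*M*r^2 / (r - 3*M)" using assms r by (simp add: field_simps)
  show ?thesis unfolding W_def L2 using r assms by (simp add: field_simps power2_eq_square)
qed

lemma Z_pos_beyond:
  assumes "H < 0" "0 < r" "2 * M / r < 1 - E^2 / (-2*H)"
  shows "0 < Z M E H L r"
proof -
  have "0 \<le> E^2 / (-2*H)" using assms by (intro divide_nonneg_pos) auto
  then have pos: "0 < 1 - 2 * M / r" using assms by linarith
  have "E^2 / 2 = -H * (E^2 / (-2*H))" using assms by simp
  also have "\<dots> < -H * (1 - 2 * M / r)" using assms by (intro mult_strict_left_mono) auto
  also have "\<dots> \<le> 1/2 * (L^2 / r^2) * (1 - 2 * M / r) + -H * (1 - 2 * M / r)" using pos by simp
  also have "\<dots> = W M H L r" unfolding W_def by (simp add: algebra_simps)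
  finally show ?thesis unfolding Z_def by simp
qed

(* The other critical radius of W, its local maximum. *)
definition r1 :: "real \<Rightarrow> real \<Rightarrow> real \<Rightarrow> real" where
  "r1 M H L = (L^2 - L * sqrt (L^2 + 24*H*M^2)) / (-4*H*M)"

(* Beyond 2 M / (1 - E^2 / (-2 H)) the lower bound -H (1 - 2 M / r) of W exceeds E^2 / 2. *)
definition r_outer :: "real \<Rightarrow> real \<Rightarrow> real \<Rightarrow> real \<Rightarrow> real" where
  "r_outer M E H L = r0 M H L + 2 * M / (1 - E^2 / (-2*H))"

context
  fixes M H L :: real
  assumes M_pos: "0 < M" and HL_tilde: "(H, L) \<in> Lambda_tilde M"
begin

lemma H_neg: "H < 0"
  using HL_tilde mem_Lambda_tilde_iff by blast

lemma scaled_L_gt: "4 * sqrt 2 < L / (sqrt (-H) * M)"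
  using HL_tilde M_pos H_neg by (simp add: mem_Lambda_tilde_iff pos_less_divide_eq mult.assoc)

lemma L_bounds: "0 < L" "-32 * H * M^2 < L^2"
proof -
  define u where "u = L / (sqrt (-H) * M)"
  have u: "0 < u" "32 < u^2" using scaled_L_gt four_sqrt2_less_iff unfolding u_def by auto
  have L: "L = u * sqrt (-H) * M" unfolding u_def using M_pos H_neg by simp
  show "0 < L" unfolding L using u M_pos H_neg by simp
  have "-32 * H * M^2 = 32 * (sqrt (-H) * M)^2" using H_neg by (simp add: power_mult_distrib)
  also have "\<dots> < u^2 * (sqrt (-H) * M)^2" using u M_pos H_neg by simp
  finally show "-32 * H * M^2 < L^2" unfolding L by (simp add: power_mult_distrib)
qed

lemma r1_bounds: "3 * M < r1 M H L" "r1 M H L < 4 * M" "r1 M H L < r0 M H L"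
proof -
  define S where "S = sqrt (L^2 + 24*H*M^2)"
  have HM: "H * M^2 < 0" using M_pos H_neg by (simp add: mult_neg_pos)
  have S2: "S^2 = L^2 + 24*H*M^2" and S: "0 < S"
    unfolding S_def using L_bounds HM by simp_all
  have "S < L" by (rule power2_less_imp_less) (use S2 HM L_bounds in simp_all)
  moreover have "L < 2 * S" by (rule power2_less_imp_less) (use S2 L_bounds S in simp_all)
  ultimately have SL: "(L - S) * (L - 2*S) < 0" "0 < (L - S)^2" by (simp_all add: mult_pos_neg)
  have den: "0 < -4*H*M" using M_pos H_neg by (simp add: mult_neg_pos)
  have HM_S: "H * M^2 = (S^2 - L^2) / 24" using S2 by simp
  have "4*M*(-4*H*M) = -16 * (H * M^2)" by (simp add: power2_eq_square)
  then have "L^2 - L*S < 4*M*(-4*H*M)"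
    unfolding HM_S using SL by (simp add: algebra_simps power2_eq_square)
  then show "r1 M H L < 4 * M" unfolding r1_def S_def[symmetric] by (subst pos_divide_less_eq[OF den])
  have "3*M*(-4*H*M) = -12 * (H * M^2)" by (simp add: power2_eq_square)
  then have "3*M*(-4*H*M) < L^2 - L*S"
    unfolding HM_S using SL by (simp add: algebra_simps power2_eq_square)
  then show "3 * M < r1 M H L" unfolding r1_def S_def[symmetric] by (subst pos_less_divide_eq[OF den])
  show "r1 M H L < r0 M H L"
    unfolding r1_def r0_def S_def[symmetric] using den S L_bounds by (intro divide_strict_right_mono) auto
qed

lemma critical_poly_factor:
  "-2*H*M*r^2 - L^2*r + 3*L^2*M = -2*H*M * (r - r0 M H L) * (r - r1 M H L)"
proof -
  define S where "S = sqrt (L^2 + 24*H*M^2)"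
  have "H * M^2 < 0" using M_pos H_neg by (simp add: mult_neg_pos)
  then have S2: "S^2 = L^2 + 24*H*M^2" unfolding S_def using L_bounds by simp
  have nz: "H \<noteq> 0" "M \<noteq> 0" using M_pos H_neg by auto
  have sum: "r0 M H L + r1 M H L = L^2 / (-2*H*M)"
    unfolding r0_def r1_def S_def[symmetric] using nz by (simp add: field_simps)
  have "r0 M H L * r1 M H L = L^2 * (L^2 - S^2) / (-4*H*M)^2"
    unfolding r0_def r1_def S_def[symmetric] by (simp add: power2_eq_square algebra_simps)
  also have "\<dots> = -3 * L^2 / (2*H)" unfolding S2 using nz by (simp add: field_simps power2_eq_square)
  finally have prod: "r0 M H L * r1 M H L = -3 * L^2 / (2*H)" .
  have "-2*H*M * (r - r0 M H L) * (r - r1 M H L)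
      = -2*H*M * (r^2 - (r0 M H L + r1 M H L) * r + r0 M H L * r1 M H L)"
    by (simp add: algebra_simps power2_eq_square)
  also have "\<dots> = -2*H*M*r^2 - L^2*r + 3*L^2*M"
    unfolding sum prod using nz by (simp add: field_simps power2_eq_square)
  finally show ?thesis ..
qed

lemma r1_pos: "0 < r1 M H L"
  using r1_bounds M_pos by linarith

lemma has_real_derivative_Z_factored:
  "r \<noteq> 0 \<Longrightarrow>
    (Z M E H L has_real_derivative -2*H*M * (r - r0 M H L) * (r - r1 M H L) / r^4) (at r)"
  using has_real_derivative_Z critical_poly_factor by metis

lemma deriv_Z: "r \<noteq> 0 \<Longrightarrow> deriv (Z M E H L) r = -2*H*M * (r - r0 M H L) * (r - r1 M H L) / r^4"
  using has_real_derivative_Z_factored by (rule DERIV_imp_deriv)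

lemma deriv_Z_mult_pos:
  assumes "r1 M H L < r" "r \<noteq> r0 M H L"
  shows "0 < deriv (Z M E H L) r * (r - r0 M H L)"
proof -
  have r: "0 < r" using assms r1_pos by linarith
  have "0 < -2*H*M" using M_pos H_neg by (simp add: mult_neg_pos)
  moreover have "0 < (r - r0 M H L)^2 * (r - r1 M H L)" using assms by simp
  ultimately have "0 < (-2*H*M) * ((r - r0 M H L)^2 * (r - r1 M H L)) / r^4"
    using r by (intro divide_pos_pos mult_pos_pos[of "-2*H*M"]) auto
  then show ?thesis using r by (simp add: deriv_Z power2_eq_square algebra_simps)
qed

lemma has_real_derivative_deriv_Z:
  "r \<noteq> 0 \<Longrightarrow> (Z M E H L has_real_derivative deriv (Z M E H L) r) (at r)"
  using has_real_derivative_Z_factored[of r] deriv_Z[of r] by simp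

lemma strict_antimono_on_Z: "strict_antimono_on {r1 M H L..r0 M H L} (Z M E H L)"
proof (rule monotone_onI)
  fix a b assume ab: "a \<in> {r1 M H L..r0 M H L}" "b \<in> {r1 M H L..r0 M H L}" "a < b"
  show "Z M E H L b < Z M E H L a"
  proof (rule DERIV_neg_imp_decreasing_open[OF \<open>a < b\<close>])
    fix x assume "a < x" "x < b"
    then have x: "r1 M H L < x" "x < r0 M H L" using ab by auto
    then have "deriv (Z M E H L) x < 0"
      using deriv_Z_mult_pos[of x] by (auto simp: zero_less_mult_iff)
    moreover have "x \<noteq> 0" using x r1_pos by auto
    ultimately show "\<exists>D. (Z M E H L has_real_derivative D) (at x) \<and> D < 0"
      using has_real_derivative_deriv_Z by blast
  next
    show "continuous_on {a..b} (Z M E H L)"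
      using ab r1_pos by (intro continuous_on_subset[OF continuous_on_Z]) auto
  qed
qed

lemma strict_mono_on_Z: "strict_mono_on {r0 M H L..} (Z M E H L)"
proof (rule monotone_onI)
  fix a b assume ab: "a \<in> {r0 M H L..}" "b \<in> {r0 M H L..}" "a < b"
  have r1_r0: "r1 M H L < r0 M H L" using r1_bounds by simp
  show "Z M E H L a < Z M E H L b"
  proof (rule DERIV_pos_imp_increasing_open[OF \<open>a < b\<close>])
    fix x assume "a < x" "x < b"
    then have x: "r1 M H L < x" "r0 M H L < x" using ab r1_r0 by auto
    then have "0 < deriv (Z M E H L) x"
      using deriv_Z_mult_pos[of x] by (auto simp: zero_less_mult_iff)
    moreover have "x \<noteq> 0" using x r1_pos by auto
    ultimately show "\<exists>D. (Z M E H L has_real_derivative D) (at x) \<and> 0 < D"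
      using has_real_derivative_deriv_Z by blast
  next
    show "continuous_on {a..b} (Z M E H L)"
      using ab r1_pos r1_r0 by (intro continuous_on_subset[OF continuous_on_Z]) auto
  qed
qed

lemma deriv_Z_r0: "deriv (Z M E H L) (r0 M H L) = 0"
  using deriv_Z[of "r0 M H L"] r1_bounds r1_pos by simp

lemma deriv2_Z_r0: "0 < deriv (deriv (Z M E H L)) (r0 M H L)"
proof -
  define a where "a = r0 M H L"
  define b where "b = r1 M H L"
  have ab: "0 < a" "b < a" unfolding a_def b_def
    using r1_bounds r1_pos by auto
  have c: "0 < -2*H*M" using M_pos H_neg by (simp add: mult_neg_pos)
  have "((\<lambda>x. -2*H*M * (x - a) * (x - b) / x^4) has_real_derivative
      ((-2*H*M * (1 - 0) * (a - b) + -2*H*M * (a - a) * (1 - 0)) * a^4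
        - -2*H*M * (a - a) * (a - b) * (4 * a^3)) / (a^4 * a^4)) (at a)"
    using ab by (auto intro!: derivative_eq_intros)
  then have "((\<lambda>x. -2*H*M * (x - a) * (x - b) / x^4) has_real_derivative
      -2*H*M * (a - b) / a^4) (at a)"
    by (rule DERIV_cong) (use ab in \<open>simp add: field_simps\<close>)
  then have "(deriv (Z M E H L) has_real_derivative -2*H*M * (a - b) / a^4) (at a)"
  proof (rule has_field_derivative_transform_within_open[of _ _ _ "{0<..}"])
    fix x :: real assume "x \<in> {0<..}"
    then show "-2*H*M * (x - a) * (x - b) / x^4 = deriv (Z M E H L) x"
      using deriv_Z[of x] unfolding a_def b_def by simp
  qed (use ab in auto)
  then have "deriv (deriv (Z M E H L)) a = -2*H*M * (a - b) / a^4"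
    by (rule DERIV_imp_deriv)
  also have "\<dots> > 0" using ab c by (intro divide_pos_pos mult_pos_pos[of "-2*H*M"]) auto
  finally show ?thesis unfolding a_def .
qed

lemma r0_eq_zeta_radius: "r0 M H L = M * zeta_radius (L / (sqrt (-H) * M))"
proof -
  define c where "c = sqrt (-H) * M"
  define u where "u = L / c"
  have H: "H < 0" using H_neg .
  have c: "0 < c" "c^2 = -H * M^2" unfolding c_def using M_pos H by (simp_all add: power_mult_distrib)
  have L: "L = u * c" unfolding u_def using c by simp
  have "u^2 > 32" using scaled_L_gt four_sqrt2_less_iff unfolding u_def c_def by auto
  have "L^2 + 24*H*M^2 = c^2 * (u^2 - 24)" unfolding L power_mult_distrib c(2) by (simp add: algebra_simps)
  then have S: "sqrt (L^2 + 24*H*M^2) = c * sqrt (u^2 - 24)"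
    using c(1) by (simp add: real_sqrt_mult)
  have "r0 M H L = c^2 * (u^2 + u * sqrt (u^2 - 24)) / (-4*H*M)"
    unfolding r0_def S unfolding L by (simp add: algebra_simps power_mult_distrib power2_eq_square)
  also have "\<dots> = M * zeta_radius u"
    unfolding zeta_radius_def c(2) using H M_pos by (simp add: field_simps power2_eq_square)
  finally show ?thesis unfolding u_def c_def .
qed

lemma W_r0_eq_zeta: "W M H L (r0 M H L) = -H * zeta (L / (sqrt (-H) * M))"
proof -
  define u where "u = L / (sqrt (-H) * M)"
  have u: "4 * sqrt 2 < u" using scaled_L_gt unfolding u_def .
  have r0: "r0 M H L = M * zeta_radius u" using r0_eq_zeta_radius unfolding u_def .
  have "3 * M < r0 M H L" using r1_bounds by simp
  then have "W M H L (r0 M H L) = -H * (r0 M H L - 2*M)^2 / (r0 M H L * (r0 M H L - 3*M))"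
    using M_pos critical_poly_factor[of "r0 M H L"] by (intro W_at_critical_point) auto
  also have "\<dots> = -H * zeta_ratio (zeta_radius u)"
    unfolding r0 zeta_ratio_def using M_pos zeta_radius_gt_12[OF u]
    by (simp add: field_simps power2_eq_square)
  finally show ?thesis using zeta_eq_zeta_ratio[OF u] unfolding u_def by simp
qed

lemma critical_value_condition_iff:
  "W M H L (r0 M H L) < E^2 / 2 \<and> E^2 / 2 < -H \<longleftrightarrow>
    -(27/50) * E^2 < H \<and> H < -(1/2) * E^2 \<and> L < sqrt (-H) * M * zeta_inv (E^2 / (-2*H))"
proof -
  define u where "u = L / (sqrt (-H) * M)"
  define y where "y = E^2 / (-2*H)"
  have H: "H < 0" using H_neg .
  have u: "4 * sqrt 2 < u" using scaled_L_gt unfolding u_def .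
  have c: "0 < sqrt (-H) * M" using H M_pos by simp
  have W_iff: "W M H L (r0 M H L) < E^2 / 2 \<longleftrightarrow> zeta u < y"
    unfolding W_r0_eq_zeta u_def[symmetric] y_def using H
    by (simp add: field_simps) linarith
  have y_less_1: "E^2 / 2 < -H \<longleftrightarrow> y < 1" unfolding y_def using H by (auto simp: field_simps)
  have y_gt: "-(27/50) * E^2 < H \<longleftrightarrow> 25 / 27 < y" unfolding y_def using H by (auto simp: field_simps)
  have L_iff: "zeta u < y \<longleftrightarrow> L < sqrt (-H) * M * zeta_inv y" if "25 / 27 < y" "y < 1"
  proof -
    have "zeta u < y \<longleftrightarrow> u < zeta_inv y" using zeta_less_iff_less_zeta_inv[OF that u] .
    also have "\<dots> \<longleftrightarrow> L < sqrt (-H) * M * zeta_inv y"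
      unfolding u_def using c by (simp add: pos_divide_less_eq mult.commute)
    finally show ?thesis .
  qed
  show ?thesis
    using W_iff y_less_1 y_gt L_iff zeta_bounds[OF u] unfolding y_def[symmetric] by force
qed

context
  fixes E :: real
  assumes energy_above_min: "W M H L (r0 M H L) < E^2 / 2"
    and energy_below_limit: "E^2 / 2 < -H"
begin

lemma Z_r0_neg: "Z M E H L (r0 M H L) < 0"
  using energy_above_min unfolding Z_def by simp

lemma Z_r1_pos: "0 < Z M E H L (r1 M H L)"
proof -
  define r where "r = r1 M H L"
  have r: "3 * M < r" "r < 4 * M" unfolding r_def using r1_bounds by auto
  have W: "W M H L r = -H * (r - 2*M)^2 / (r * (r - 3*M))"
    using M_pos r critical_poly_factor[of r] unfolding r_def
    by (intro W_at_critical_point) auto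
  have "r * (r - 3*M) < (r - 2*M)^2"
    using r M_pos by (simp add: power2_eq_square algebra_simps)
  then have "1 < (r - 2*M)^2 / (r * (r - 3*M))" using r M_pos by simp
  then have "-H * 1 < -H * ((r - 2*M)^2 / (r * (r - 3*M)))"
    using H_neg by (intro mult_strict_left_mono) auto
  then have "-H < W M H L r" unfolding W by simp
  then show ?thesis unfolding Z_def r_def using energy_below_limit by simp
qed

lemma inner_sign_change_root: "\<exists>r. sign_change_root (\<lambda>r. - Z M E H L r) (r1 M H L) (r0 M H L) r"
proof (rule sign_change_root_exists)
  show "r1 M H L < r0 M H L" using r1_bounds by simp
  show "continuous_on {r1 M H L..r0 M H L} (\<lambda>r. - Z M E H L r)"
    using r1_pos
    by (intro continuous_on_minus continuous_on_subset[OF continuous_on_Z]) auto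
  show "strict_mono_on {r1 M H L..r0 M H L} (\<lambda>r. - Z M E H L r)"
    using strict_antimono_on_Z by (auto simp: monotone_on_def)
  show "- Z M E H L (r1 M H L) < 0" "0 < - Z M E H L (r0 M H L)"
    using Z_r1_pos Z_r0_neg by auto
qed

lemma outer_sign_change_root: "\<exists>r. sign_change_root (Z M E H L) (r0 M H L) (r_outer M E H L) r"
proof (rule sign_change_root_exists)
  have H: "H < 0" "E^2 / 2 < -H" using H_neg energy_below_limit by auto
  then have y: "0 < 1 - E^2 / (-2*H)" by (simp add: field_simps)
  have r0: "0 < r0 M H L" using r1_bounds r1_pos by simp
  show "r0 M H L < r_outer M E H L" unfolding r_outer_def using y M_pos by simp
  then show "continuous_on {r0 M H L..r_outer M E H L} (Z M E H L)"
    using r0 by (intro continuous_on_subset[OF continuous_on_Z]) auto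
  show "strict_mono_on {r0 M H L..r_outer M E H L} (Z M E H L)"
    using strict_mono_on_Z by (rule monotone_on_subset) auto
  show "Z M E H L (r0 M H L) < 0" by (rule Z_r0_neg)
  have "2 * M / (1 - E^2 / (-2*H)) < r_outer M E H L" unfolding r_outer_def using r0 by simp
  moreover have "0 < r_outer M E H L" using r0 \<open>r0 M H L < r_outer M E H L\<close> by simp
  ultimately have "2 * M / r_outer M E H L < 1 - E^2 / (-2*H)"
    using y M_pos by (simp add: divide_less_eq mult.commute)
  then show "0 < Z M E H L (r_outer M E H L)"
    using H \<open>0 < r_outer M E H L\<close> by (intro Z_pos_beyond) auto
qed

end

end

lemma continuous_on_Lambda_E_radii:
  assumes "0 < M"
  shows "continuous_on (Lambda_E M E) (\<lambda>p. r0 M (fst p) (snd p))"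
    and "continuous_on (Lambda_E M E) (\<lambda>p. r1 M (fst p) (snd p))"
    and "continuous_on (Lambda_E M E) (\<lambda>p. r_outer M E (fst p) (snd p))"
proof -
  have H: "fst p < 0" "1 - E^2 / (-2 * fst p) \<noteq> 0" if "p \<in> Lambda_E M E" for p
  proof -
    obtain H L where p: "p = (H, L)" by fastforce
    then have "H < 0" "E^2 / 2 < -H" using that by (auto simp: mem_Lambda_E_iff mem_Lambda_tilde_iff)
    then show "fst p < 0" "1 - E^2 / (-2 * fst p) \<noteq> 0" unfolding p by (auto simp: field_simps)
  qed
  show "continuous_on (Lambda_E M E) (\<lambda>p. r0 M (fst p) (snd p))"
    unfolding r0_def using assms by (intro continuous_intros) (auto dest: H)
  then show "continuous_on (Lambda_E M E) (\<lambda>p. r_outer M E (fst p) (snd p))"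
    unfolding r_outer_def using assms by (intro continuous_intros) (auto dest: H)
  show "continuous_on (Lambda_E M E) (\<lambda>p. r1 M (fst p) (snd p))"
    unfolding r1_def using assms by (intro continuous_intros) (auto dest: H)
qed

lemma continuous_on_Z_parameters: "continuous_on S (\<lambda>p. Z M E (fst p) (snd p) r)"
proof (cases "r = 0")
  case True
  then show ?thesis unfolding Z_def W_def by (simp add: continuous_intros)
next
  case False
  then show ?thesis unfolding Z_def W_def by (intro continuous_intros) auto
qed

lemma Lambda_E_eq:
  assumes M_pos: "0 < M"
  shows "Lambda_E M E =
           {(H, L). -(27/50) * E^2 < H \<and> H < -(1/2) * E^2 \<and>
              4 * sqrt 2 * sqrt (-H) * M < L \<and>
              L < sqrt (-H) * M * zeta_inv (E^2 / (-2*H))}"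
proof -
  have "(H, L) \<in> Lambda_E M E \<longleftrightarrow>
          -(27/50) * E^2 < H \<and> H < -(1/2) * E^2 \<and> 4 * sqrt 2 * sqrt (-H) * M < L \<and>
          L < sqrt (-H) * M * zeta_inv (E^2 / (-2*H))" for H L
  proof (cases "(H, L) \<in> Lambda_tilde M")
    case True
    then show ?thesis
      using critical_value_condition_iff[OF M_pos True, of E]
      by (auto simp: mem_Lambda_E_iff mem_Lambda_tilde_iff)
  next
    case False
    have "0 \<le> E^2" by simp
    then have "\<not> (H < -(1/2) * E^2 \<and> 4 * sqrt 2 * sqrt (-H) * M < L)"
      using False unfolding mem_Lambda_tilde_iff by linarith
    moreover have "(H, L) \<notin> Lambda_E M E" using False mem_Lambda_E_iff by blast
    ultimately show ?thesis by blast
  qed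
  then show ?thesis by auto
qed

lemma r0_nondegenerate_minimum:
  assumes "0 < M" "(H, L) \<in> Lambda_E M E"
  shows "Z M E H L (r0 M H L) < 0 \<and> deriv (Z M E H L) (r0 M H L) = 0 \<and>
    0 < deriv (deriv (Z M E H L)) (r0 M H L)"
proof -
  from assms(2) have tilde: "(H, L) \<in> Lambda_tilde M"
    and energy: "W M H L (r0 M H L) < E^2 / 2" "E^2 / 2 < -H"
    by (simp_all add: mem_Lambda_E_iff)
  show ?thesis
    using Z_r0_neg[OF assms(1) tilde energy] deriv_Z_r0[OF assms(1) tilde] deriv2_Z_r0[OF assms(1) tilde]
    by blast
qed

lemma turning_points_exist:
  assumes M_pos: "0 < M"
  shows "\<exists>rm rp :: real \<times> real \<Rightarrow> real.
    continuous_on (Lambda_E M E) rm \<and> continuous_on (Lambda_E M E) rp \<and>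
    (\<forall>(H, L) \<in> Lambda_E M E.
       0 < rm (H, L) \<and> 0 < rp (H, L) \<and>
       rm (H, L) < r0 M H L \<and> r0 M H L < rp (H, L) \<and>
       Z M E H L (rm (H, L)) = 0 \<and> Z M E H L (rp (H, L)) = 0 \<and>
       (\<forall>r \<in> {rm (H, L) .. rp (H, L)} - {r0 M H L}.
          deriv (Z M E H L) r * (r - r0 M H L) > 0))"
proof -
  define rm where "rm p = (SOME r. sign_change_root (\<lambda>r. - Z M E (fst p) (snd p) r)
    (r1 M (fst p) (snd p)) (r0 M (fst p) (snd p)) r)" for p
  define rp where "rp p = (SOME r. sign_change_root (Z M E (fst p) (snd p))
    (r0 M (fst p) (snd p)) (r_outer M E (fst p) (snd p)) r)" for p
  have rm: "sign_change_root (\<lambda>r. - Z M E (fst p) (snd p) r)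
      (r1 M (fst p) (snd p)) (r0 M (fst p) (snd p)) (rm p)" if "p \<in> Lambda_E M E" for p
  proof -
    have "(fst p, snd p) \<in> Lambda_E M E" using that by simp
    then show ?thesis unfolding rm_def mem_Lambda_E_iff
      by (elim conjE) (rule someI_ex, rule inner_sign_change_root[OF M_pos])
  qed
  have rp: "sign_change_root (Z M E (fst p) (snd p))
      (r0 M (fst p) (snd p)) (r_outer M E (fst p) (snd p)) (rp p)" if "p \<in> Lambda_E M E" for p
  proof -
    have "(fst p, snd p) \<in> Lambda_E M E" using that by simp
    then show ?thesis unfolding rp_def mem_Lambda_E_iff
      by (elim conjE) (rule someI_ex, rule outer_sign_change_root[OF M_pos])
  qed
  have "continuous_on (Lambda_E M E) rm"
    by (rule continuous_on_sign_change_root[OF rm continuous_on_Lambda_E_radii(2,1)[OF M_pos]])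
      (auto intro: continuous_on_minus continuous_on_Z_parameters)
  moreover have "continuous_on (Lambda_E M E) rp"
    by (rule continuous_on_sign_change_root[OF rp continuous_on_Lambda_E_radii(1,3)[OF M_pos]])
      (auto intro: continuous_on_Z_parameters)
  moreover have
    "0 < rm (H, L) \<and> 0 < rp (H, L) \<and> rm (H, L) < r0 M H L \<and> r0 M H L < rp (H, L) \<and>
     Z M E H L (rm (H, L)) = 0 \<and> Z M E H L (rp (H, L)) = 0 \<and>
     (\<forall>r \<in> {rm (H, L) .. rp (H, L)} - {r0 M H L}. deriv (Z M E H L) r * (r - r0 M H L) > 0)"
    if HL: "(H, L) \<in> Lambda_E M E" for H L
  proof -
    have roots: "r1 M H L < rm (H, L)" "rm (H, L) < r0 M H L" "r0 M H L < rp (H, L)"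
      "Z M E H L (rm (H, L)) = 0" "Z M E H L (rp (H, L)) = 0"
      using rm[OF HL] rp[OF HL] unfolding sign_change_root_def by auto
    have tilde: "(H, L) \<in> Lambda_tilde M" using HL mem_Lambda_E_iff by blast
    show ?thesis
      using roots r1_pos[OF M_pos tilde] deriv_Z_mult_pos[OF M_pos tilde] by force
  qed
  ultimately show ?thesis by blast
qed

theorem proposition4p3:
  fixes M E :: real
  assumes "M > 0" and "sqrt (25/27) < E" and "E < 1"
  shows "Lambda_E M E =
           {(H, L). -(27/50) * E^2 < H \<and> H < -(1/2) * E^2 \<and>
              4 * sqrt 2 * sqrt (-H) * M < L \<and>
              L < sqrt (-H) * M * zeta_inv (E^2 / (-2*H))}
       \<and> (\<forall>(H, L) \<in> Lambda_E M E.
             Z M E H L (r0 M H L) < 0 \<and>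
             deriv (Z M E H L) (r0 M H L) = 0 \<and>
             deriv (deriv (Z M E H L)) (r0 M H L) > 0)
       \<and> (\<exists>rm rp :: real \<times> real \<Rightarrow> real.
             continuous_on (Lambda_E M E) rm \<and> continuous_on (Lambda_E M E) rp \<and>
             (\<forall>(H, L) \<in> Lambda_E M E.
                0 < rm (H, L) \<and> 0 < rp (H, L) \<and>
                rm (H, L) < r0 M H L \<and> r0 M H L < rp (H, L) \<and>
                Z M E H L (rm (H, L)) = 0 \<and> Z M E H L (rp (H, L)) = 0 \<and>
                (\<forall>r \<in> {rm (H, L) .. rp (H, L)} - {r0 M H L}.
                   deriv (Z M E H L) r * (r - r0 M H L) > 0)))"
  using Lambda_E_eq[OF assms(1)] r0_nondegenerate_minimum[OF assms(1)] turning_points_exist[OF assms(1)]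
  by blast

end
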